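(* Let $\mathbb{K}=(G_{\mathbb{K}},M_{\mathbb{K}},I_{\mathbb{K}})$ and $\mathbb{S}=(G_{\mathbb{S}},M_{\mathbb{S}},I_{\mathbb{S}})$ be formal contexts and $\sigma\colon G_{\mathbb{K}}\to G_{\mathbb{S}}$ a map. Then there exist a formal context $\mathbb{T}=(G_{\mathbb{T}},M_{\mathbb{T}},I_{\mathbb{T}})$ and a map $\psi\colon G_{\mathbb{K}}\to G_{\mathbb{T}}$ such that $\psi$ is a $\mathbb{T}$-measure of $\mathbb{K}$ and $\{\psi^{-1}(A)\mid A\in \mathrm{Ext}(\mathbb{T})\}=\{\sigma^{-1}(A)\mid A\in\mathrm{Ext}(\mathbb{S})\}\cap \mathrm{Ext}(\mathbb{K})$.
   Context: A formal context is a triple $(G,M,I)$ with $G$ a non-empty finite set (objects), $M$ a finite set (attributes) and $I\subseteq G\times M$. For $A\subseteq G$ let $A'=\{m\in M\mid \forall a\in A: (a,m)\in I\}$ and for $B\subseteq M$ let $B'=\{g\in G\mid \forall b\in B:(g,b)\in I\}$. An extent of $(G,M,I)$ is a set $A\subseteq G$ with $A''=A$; $\mathrm{Ext}(G,M,I)$ denotes the set of all extents. For a map $\sigma$, $\sigma^{-1}(A)$ denotes the preimage of $A$. For formal contexts $\mathbb{K}=(G,M,I)$ and $\mathbb{T}=(G_{\mathbb{T}},M_{\mathbb{T}},I_{\mathbb{T}})$, a map $\psi\colon G\to G_{\mathbb{T}}$ is a $\mathbb{T}$-measure of $\mathbb{K}$ iff for every $A\in\mathrm{Ext}(\mathbb{T})$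 the preimage $\psi^{-1}(A)$ is in $\mathrm{Ext}(\mathbb{K})$. *)

theory Defs
  imports Main
begin

definition formal_context :: "'g set \<Rightarrow> 'm set \<Rightarrow> ('g \<times> 'm) set \<Rightarrow> bool" where
  "formal_context G M I \<longleftrightarrow> G \<noteq> {} \<and> finite G \<and> finite M \<and> I \<subseteq> G \<times> M"

definition obj_deriv :: "'g set \<Rightarrow> 'm set \<Rightarrow> ('g \<times> 'm) set \<Rightarrow> 'g set \<Rightarrow> 'm set" where
  "obj_deriv G M I A = {m \<in> M. \<forall>a \<in> A. (a, m) \<in> I}"

definition attr_deriv :: "'g set \<Rightarrow> 'm set \<Rightarrow> ('g \<times> 'm) set \<Rightarrow> 'm set \<Rightarrow> 'g set" where
  "attr_deriv G M I B = {g \<in> G. \<forall>b \<in> B. (g, b) \<in> I}"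

definition extents :: "'g set \<Rightarrow> 'm set \<Rightarrow> ('g \<times> 'm) set \<Rightarrow> 'g set set" where
  "extents G M I = {A. attr_deriv G M I (obj_deriv G M I A) = A}"

definition preim :: "'g set \<Rightarrow> ('g \<Rightarrow> 'h) \<Rightarrow> 'h set \<Rightarrow> 'g set" where
  "preim G f A = {g \<in> G. f g \<in> A}"

definition is_measure ::
  "'g set \<Rightarrow> 'm set \<Rightarrow> ('g \<times> 'm) set \<Rightarrow> 'h set \<Rightarrow> 'n set \<Rightarrow> ('h \<times> 'n) set \<Rightarrow> ('g \<Rightarrow> 'h) \<Rightarrow> bool" where
  "is_measure G M I GT MT IT psi \<longleftrightarrow>
     (\<forall>g \<in> G. psi g \<in> GT) \<and> (\<forall>A \<in> extents GT MT IT. preim G psi A \<in> extents G M I)"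

end

theory Submission
  imports Defs
begin

text \<open>The extents of any context form a closure system, and closure systems are closed under
  intersections and under preimages. So
  \<open>F = {\<sigma>\<inverse>(A) | A \<in> Ext(\<bbbS>)} \<inter> Ext(\<bbbK>)\<close> is a closure system on \<open>G\<^sub>\<bbbK>\<close>. Every closure
  system \<open>F\<close> on \<open>G\<close> is the extent set of the membership context \<open>(G, F, \<in>)\<close>, so
  \<open>\<bbbT> = (G\<^sub>\<bbbK>, F, \<in>)\<close> with \<open>\<psi> = id\<close> is a witness.\<close>

definition closure_system :: "'a set \<Rightarrow> 'a set set \<Rightarrow> bool" where
  "closure_system G F \<longleftrightarrow>
     F \<subseteq> Pow G \<and> G \<in> F \<and> (\<forall>\<C>. \<C> \<noteq> {} \<longrightarrow> \<C> \<subseteq> F \<longrightarrow> \<Inter>\<C> \<in> F)"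

definition membership_incidence :: "'a set set \<Rightarrow> ('a \<times> 'a set) set" where
  "membership_incidence F = {(g, C). g \<in> C \<and> C \<in> F}"

lemma extents_subset: "A \<in> extents G M I \<Longrightarrow> A \<subseteq> G"
  unfolding extents_def attr_deriv_def by auto

lemma closure_system_extents: "closure_system G (extents G M I)"
  unfolding closure_system_def
proof (intro conjI allI impI)
  show "extents G M I \<subseteq> Pow G" using extents_subset by blast
  show "G \<in> extents G M I" unfolding extents_def attr_deriv_def obj_deriv_def by auto
next
  fix \<A> assume "\<A> \<noteq> {}" and \<A>: "\<A> \<subseteq> extents G M I"
  let ?cl = "\<lambda>A. attr_deriv G M I (obj_deriv G M I A)"
  have "?cl (\<Inter>\<A>) \<subseteq> ?cl A" if "A \<in> \<A>" for A
    using that unfolding attr_deriv_def obj_deriv_def by blast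
  moreover have "?cl A = A" if "A \<in> \<A>" for A using that \<A> unfolding extents_def by auto
  moreover have "\<Inter>\<A> \<subseteq> ?cl (\<Inter>\<A>)"
    using \<open>\<A> \<noteq> {}\<close> \<A> extents_subset unfolding attr_deriv_def obj_deriv_def by blast
  ultimately show "\<Inter>\<A> \<in> extents G M I" unfolding extents_def by blast
qed

lemma closure_system_Int:
  assumes "closure_system G F" and "closure_system G H"
  shows "closure_system G (F \<inter> H)"
  using assms unfolding closure_system_def by (metis Int_subset_iff IntI le_infI1)

lemma preim_eq_Int_vimage: "preim G f A = G \<inter> f -` A"
  unfolding preim_def by auto

lemma closure_system_preim:
  assumes f: "\<forall>g \<in> G. f g \<in> H" and F: "closure_system H F"
  shows "closure_system G (preim G f ` F)"
  unfolding closure_system_def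
proof (intro conjI allI impI)
  show "preim G f ` F \<subseteq> Pow G" unfolding preim_def by auto
  have "preim G f H = G" using f unfolding preim_def by auto
  moreover have "H \<in> F" using F by (simp add: closure_system_def)
  ultimately show "G \<in> preim G f ` F" by (metis image_eqI)
next
  fix \<C> assume "\<C> \<noteq> {}" and "\<C> \<subseteq> preim G f ` F"
  then obtain \<A> where \<A>: "\<A> \<subseteq> F" and \<C>: "\<C> = preim G f ` \<A>"
    by (meson subset_imageE)
  with \<open>\<C> \<noteq> {}\<close> have "\<A> \<noteq> {}" by blast
  with \<A> have "\<Inter>\<A> \<in> F" using F by (simp add: closure_system_def)
  moreover have "\<Inter>\<C> = preim G f (\<Inter>\<A>)"
    using \<open>\<C> \<noteq> {}\<close> unfolding \<C> preim_eq_Int_vimage by auto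
  ultimately show "\<Inter>\<C> \<in> preim G f ` F" by blast
qed

lemma extents_membership_context:
  assumes F: "closure_system G F"
  shows "extents G F (membership_incidence F) = F"
proof -
  let ?I = "membership_incidence F"
  have F_Pow: "F \<subseteq> Pow G" and "G \<in> F" using F by (simp_all add: closure_system_def)
  have cl: "attr_deriv G F ?I (obj_deriv G F ?I B) = {g \<in> G. \<forall>C \<in> F. B \<subseteq> C \<longrightarrow> g \<in> C}" for B
    unfolding attr_deriv_def obj_deriv_def membership_incidence_def by auto
  show ?thesis
  proof (intro equalityI subsetI)
    fix B assume B: "B \<in> extents G F ?I"
    let ?\<C> = "{C \<in> F. B \<subseteq> C}"
    have "?\<C> \<noteq> {}" using B \<open>G \<in> F\<close> extents_subset by blast
    then have "\<Inter>?\<C> \<in> F" using F by (simp add: closure_system_def)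
    moreover have "B = \<Inter>?\<C>" using B F_Pow \<open>G \<in> F\<close> unfolding extents_def cl by blast
    ultimately show "B \<in> F" by simp
  next
    fix B assume "B \<in> F"
    then show "B \<in> extents G F ?I" using F_Pow unfolding extents_def cl by blast
  qed
qed

lemma formal_context_membership:
  assumes "formal_context G M I" and "closure_system G F"
  shows "formal_context G F (membership_incidence F)"
proof -
  have "F \<subseteq> Pow G" using assms(2) by (simp add: closure_system_def)
  then have "finite F" using assms(1) unfolding formal_context_def by (meson finite_Pow_iff rev_finite_subset)
  with \<open>F \<subseteq> Pow G\<close> assms(1) show ?thesis
    unfolding formal_context_def membership_incidence_def by blast
qed

lemma preim_id: "A \<subseteq> G \<Longrightarrow> preim G id A = A"
  unfolding preim_def by auto

lemma image_preim_id: "F \<subseteq> Pow G \<Longrightarrow> preim G id ` F = F"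
  by (simp add: preim_id subset_iff cong: image_cong)

lemma is_measure_id_membership:
  assumes F: "closure_system G F" and "F \<subseteq> extents G M I"
  shows "is_measure G M I G F (membership_incidence F) id"
  using assms preim_id extents_subset
  unfolding is_measure_def extents_membership_context[OF F] by (metis id_apply subsetD)

theorem corollary1:
  fixes GK :: "'g set" and MK :: "'m set" and IK :: "('g \<times> 'm) set"
    and GS :: "'h set" and MS :: "'n set" and IS :: "('h \<times> 'n) set"
    and \<sigma> :: "'g \<Rightarrow> 'h"
  assumes "formal_context GK MK IK"
    and "formal_context GS MS IS"
    and "\<forall>g \<in> GK. \<sigma> g \<in> GS"
  shows "\<exists>(GT :: 'g set) (MT :: 'g set set) (IT :: ('g \<times> 'g set) set) (\<psi> :: 'g \<Rightarrow> 'g).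
           formal_context GT MT IT \<and>
           is_measure GK MK IK GT MT IT \<psi> \<and>
           (\<lambda>A. preim GK \<psi> A) ` extents GT MT IT
             = ((\<lambda>A. preim GK \<sigma> A) ` extents GS MS IS) \<inter> extents GK MK IK"
proof -
  define F where "F = ((\<lambda>A. preim GK \<sigma> A) ` extents GS MS IS) \<inter> extents GK MK IK"
  have F: "closure_system GK F"
    unfolding F_def
    by (intro closure_system_Int closure_system_preim[OF assms(3)] closure_system_extents)
  have "(\<lambda>A. preim GK id A) ` extents GK F (membership_incidence F) = F"
    using F by (simp add: extents_membership_context image_preim_id closure_system_def)
  moreover have "is_measure GK MK IK GK F (membership_incidence F) id"
    using F by (rule is_measure_id_membership) (simp add: F_def)
  moreover have "formal_context GK F (membership_incidence F)"
    using assms(1) F by (rule formal_context_membership)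
  ultimately show ?thesis unfolding F_def by blast
qed

end
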